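(* Let $\nu$ be a Borel probability measure on $\mathbb{R}$ with characteristic function $\hat\nu$, and suppose there are constants $b_n>0$, $c_n\in\mathbb{R}$, $m\in\mathbb{R}$ and $\sigma>0$ such that $\lim_{n\to\infty}e^{itc_n}[\hat\nu(b_nt)]^n=e^{itm-\frac12\sigma^2t^2}$ for all $t\in\mathbb{R}$. If $b_n\ge\frac{1}{\sqrt n}$ for all $n$, then $\int_{-\infty}^\infty\lambda^2\,\nu(d\lambda)<\infty$. *)

theory Defs
  imports "HOL-Probability.Probability"
begin

end

theory Submission
  imports Defs
begin

(* Passing to the symmetrization of nu (the law of X - Y for independent copies
   X, Y of law nu) removes the centring: its characteristic function is
   phi t = |char nu t|^2, and the hypothesis gives phi (b n t)^n -> exp (- sigma^2 t^2).
   Hence 1 - phi (b n t) = O(1/n), so phi (b n t) -> 1 for every t. If the scales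
   b n stayed away from 0, Levy's continuity theorem would force the symmetrized
   law to be the point mass at 0, contradicting the Gaussian limit; so b n comes
   arbitrarily close to 0. Along such n, 1 - phi (b n) = O(1/n) = O(b n^2), and the
   elementary bound 1 - cos u >= u^2/4 on [-1, 1] turns this into a uniform bound on
   truncated second moments of the symmetrized law. Finally a finite second moment
   of X - Y yields one for X. *)

(* On [-1, 1] the function 1 - cos u is bounded below by a multiple of u^2
   (Taylor expansion to fourth order); this turns 1 - Re of a characteristic
   function into a bound on a truncated second moment. *)
lemma one_minus_cos_lower_bound:
  fixes u :: real
  assumes "\<bar>u\<bar> \<le> 1"
  shows "u\<^sup>2 / 4 \<le> 1 - cos u"
proof -
  let ?R = "iexp u - (\<Sum>k\<le>3. (\<i> * u) ^ k / fact k)"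
  have "Re ?R = cos u - 1 + u\<^sup>2 / 2"
    by (simp add: numeral_eq_Suc Re_exp power2_eq_square fact_numeral)
  moreover have "\<bar>Re ?R\<bar> \<le> \<bar>u\<bar> ^ 4 / 24"
    using abs_Re_le_cmod[of ?R] iexp_approx1[of u 3] by (simp add: numeral_eq_Suc fact_numeral)
  moreover have "\<bar>u\<bar> ^ 4 \<le> u\<^sup>2"
  proof -
    have "\<bar>u\<bar> ^ 4 = u\<^sup>2 * u\<^sup>2" by (simp add: power2_eq_square power4_eq_xxxx)
    also have "\<dots> \<le> u\<^sup>2 * 1" using assms by (intro mult_left_mono) (auto simp: abs_square_le_1)
    finally show ?thesis by simp
  qed
  ultimately show ?thesis by linarith
qed

(* If p n^n has a positive limit, then p n = 1 - O(1/n): from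
   ln (L/2) <= n ln (p n) <= n (p n - 1) for large n. *)
lemma power_tendsto_pos_imp_deficit_bounded:
  fixes p :: "nat \<Rightarrow> real"
  assumes p: "\<And>n. 0 \<le> p n" and lim: "(\<lambda>n. p n ^ n) \<longlonglongrightarrow> L" and L: "L > 0"
  shows "\<exists>N C. \<forall>n\<ge>N. real n * (1 - p n) \<le> C"
proof -
  obtain N where N: "\<And>n. n \<ge> N \<Longrightarrow> L / 2 < p n ^ n"
    using order_tendstoD(1)[OF lim, of "L / 2"] L by (auto simp: eventually_sequentially)
  have "real n * (1 - p n) \<le> - ln (L / 2)" if "n \<ge> N" "n > 0" for n
  proof -
    have pow: "L / 2 < p n ^ n" using N that by blast
    then have "p n \<noteq> 0" using L \<open>n > 0\<close> by (auto simp: zero_power)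
    then have pos: "p n > 0" using p[of n] by simp
    have "ln (L / 2) \<le> ln (p n ^ n)" using pow L by simp
    also have "\<dots> = real n * ln (p n)" using pos by (simp add: ln_realpow)
    also have "\<dots> \<le> real n * (p n - 1)" using ln_le_minus_one[OF pos] by (simp add: mult_left_mono)
    finally show ?thesis by (simp add: algebra_simps)
  qed
  then have "\<forall>n\<ge>Suc N. real n * (1 - p n) \<le> - ln (L / 2)" by simp
  then show ?thesis by blast
qed

lemma deficit_bounded_imp_tendsto_one:
  fixes p :: "nat \<Rightarrow> real"
  assumes "\<And>n. p n \<le> 1" and "\<And>n. n \<ge> N \<Longrightarrow> real n * (1 - p n) \<le> C"
  shows "p \<longlonglongrightarrow> 1"
proof -
  have "(\<lambda>n. 1 - p n) \<longlonglongrightarrow> 0"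
  proof (rule Lim_null_comparison)
    show "\<forall>\<^sub>F n in sequentially. norm (1 - p n) \<le> C * inverse (real n)"
      unfolding eventually_sequentially
    proof (intro exI allI impI)
      fix n assume "max N 1 \<le> n"
      then show "norm (1 - p n) \<le> C * inverse (real n)"
        using assms[of n] by (simp add: field_simps)
    qed
  qed (intro tendsto_mult_right_zero lim_inverse_n)
  then have "(\<lambda>n. 1 - (1 - p n)) \<longlonglongrightarrow> 1 - 0"
    by (intro tendsto_diff tendsto_const)
  then show ?thesis by simp
qed

lemma deficit_le_scale_squared:
  fixes a q C :: real and n :: nat
  assumes "1 / sqrt (real n) \<le> a" and "n \<ge> 1"
    and "real n * (1 - q) \<le> C" and "q \<le> 1"
  shows "1 - q \<le> C * a\<^sup>2"
proof -
  have "1 / real n \<le> a\<^sup>2"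
    using power_mono[OF assms(1), of 2] by (simp add: power_divide)
  have "1 - q = 1 / real n * (real n * (1 - q))"
    using assms(2) by simp
  also have "\<dots> \<le> a\<^sup>2 * (real n * (1 - q))"
    using \<open>1 / real n \<le> a\<^sup>2\<close> assms(4) by (intro mult_right_mono) simp_all
  also have "\<dots> \<le> a\<^sup>2 * C"
    using assms(3) by (intro mult_left_mono) simp_all
  finally show ?thesis by (simp add: mult.commute)
qed

definition symmetrization :: "real measure \<Rightarrow> real measure" where
  "symmetrization \<nu> = distr (\<nu> \<Otimes>\<^sub>M \<nu>) borel (\<lambda>p. fst p - snd p)"

lemma (in real_distribution) measurable_pair_self:
  assumes "f \<in> borel \<Otimes>\<^sub>M borel \<rightarrow>\<^sub>M N"
  shows "f \<in> M \<Otimes>\<^sub>M M \<rightarrow>\<^sub>M N"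
proof -
  have "sets (M \<Otimes>\<^sub>M M) = sets (borel \<Otimes>\<^sub>M borel)"
    by (rule sets_pair_measure_cong) simp_all
  with assms show ?thesis
    using measurable_cong_sets by blast
qed

lemma real_distribution_symmetrization:
  assumes "real_distribution \<nu>"
  shows "real_distribution (symmetrization \<nu>)"
proof -
  interpret real_distribution \<nu> by fact
  interpret P: prob_space "\<nu> \<Otimes>\<^sub>M \<nu>"
    by (simp add: prob_space_axioms prob_space_pair)
  show ?thesis
    unfolding symmetrization_def by (intro P.real_distribution_distr measurable_pair_self) simp
qed

lemma char_symmetrization:
  assumes "real_distribution \<nu>"
  shows "char (symmetrization \<nu>) t = complex_of_real ((cmod (char \<nu> t))\<^sup>2)"
proof -
  interpret real_distribution \<nu> by fact
  interpret P: pair_prob_space \<nu> \<nu>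
    by (simp add: pair_prob_space.intro pair_sigma_finite_def prob_space_axioms prob_space_imp_sigma_finite)
  have int: "integrable (\<nu> \<Otimes>\<^sub>M \<nu>) (\<lambda>(x, y). iexp (t * x) * iexp (- (t * y)))"
  proof (rule P.integrable_const_bound[where B=1])
    show "AE p in \<nu> \<Otimes>\<^sub>M \<nu>. norm (case p of (x, y) \<Rightarrow> iexp (t * x) * iexp (- (t * y))) \<le> 1"
      by (intro AE_I2) (auto simp: norm_mult)
  qed (intro measurable_pair_self; simp)
  have "char (symmetrization \<nu>) t = (\<integral>p. iexp (t * (fst p - snd p)) \<partial>(\<nu> \<Otimes>\<^sub>M \<nu>))"
    unfolding char_def symmetrization_def
    by (rule integral_distr) (auto intro!: measurable_pair_self)
  also have "\<dots> = (\<integral>(x, y). iexp (t * x) * iexp (- (t * y)) \<partial>(\<nu> \<Otimes>\<^sub>M \<nu>))"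
    by (intro Bochner_Integration.integral_cong)
       (auto simp: right_diff_distrib exp_diff exp_minus field_simps)
  also have "\<dots> = (\<integral>x. (\<integral>y. iexp (t * x) * iexp (- (t * y)) \<partial>\<nu>) \<partial>\<nu>)"
    using P.integral_fst[OF int] by simp
  also have "\<dots> = char \<nu> t * (\<integral>y. cnj (iexp (t * y)) \<partial>\<nu>)"
    by (simp add: char_def exp_cnj)
  also have "\<dots> = char \<nu> t * cnj (char \<nu> t)"
    unfolding char_def by (simp only: Bochner_Integration.integral_cnj)
  also have "\<dots> = complex_of_real ((cmod (char \<nu> t))\<^sup>2)"
    by (rule complex_norm_square[symmetric])
  finally show ?thesis .
qed

(* Finite second moment of X - Y forces a finite second moment of X: for some
   x0 the integral of (x0 - y)^2 is finite (Fubini), and y^2 <= 2 (x0 - y)^2 + 2 x0^2. *)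
lemma second_moment_symmetrization:
  assumes "real_distribution \<nu>"
    and fin: "(\<integral>\<^sup>+x. ennreal (x\<^sup>2) \<partial>symmetrization \<nu>) < \<infinity>"
  shows "(\<integral>\<^sup>+x. ennreal (x\<^sup>2) \<partial>\<nu>) < \<infinity>"
proof -
  interpret real_distribution \<nu> by fact
  have meas: "(\<lambda>p. ennreal ((fst p - snd p)\<^sup>2)) \<in> borel_measurable (\<nu> \<Otimes>\<^sub>M \<nu>)"
    by (intro measurable_pair_self) simp
  have "(\<integral>\<^sup>+x. (\<integral>\<^sup>+y. ennreal ((x - y)\<^sup>2) \<partial>\<nu>) \<partial>\<nu>) = (\<integral>\<^sup>+x. ennreal (x\<^sup>2) \<partial>symmetrization \<nu>)"
    unfolding symmetrization_def
    using nn_integral_fst[OF meas] by (simp add: nn_integral_distr measurable_pair_self)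
  then have "AE x in \<nu>. (\<integral>\<^sup>+y. ennreal ((x - y)\<^sup>2) \<partial>\<nu>) \<noteq> \<infinity>"
    using fin borel_measurable_nn_integral[of "\<lambda>x y. ennreal ((x - y)\<^sup>2)" \<nu>] meas
    by (intro nn_integral_PInf_AE) simp_all
  then obtain x0 where x0: "(\<integral>\<^sup>+y. ennreal ((x0 - y)\<^sup>2) \<partial>\<nu>) \<noteq> \<infinity>"
    using eventually_happens'[OF ae_filter_bot] by blast
  have "(\<integral>\<^sup>+y. ennreal (y\<^sup>2) \<partial>\<nu>) \<le> (\<integral>\<^sup>+y. 2 * ennreal ((x0 - y)\<^sup>2) + ennreal (2 * x0\<^sup>2) \<partial>\<nu>)"
  proof (rule nn_integral_mono)
    fix y :: real
    have "y\<^sup>2 \<le> 2 * (x0 - y)\<^sup>2 + 2 * x0\<^sup>2"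
      using zero_le_power2[of "2 * x0 - y"] by (simp add: power2_eq_square algebra_simps)
    then have "ennreal (y\<^sup>2) \<le> ennreal (2 * (x0 - y)\<^sup>2 + 2 * x0\<^sup>2)"
      by (rule ennreal_leI)
    also have "\<dots> = 2 * ennreal ((x0 - y)\<^sup>2) + ennreal (2 * x0\<^sup>2)"
      by (subst ennreal_plus) (auto simp: ennreal_mult)
    finally show "ennreal (y\<^sup>2) \<le> 2 * ennreal ((x0 - y)\<^sup>2) + ennreal (2 * x0\<^sup>2)" .
  qed
  also have "\<dots> = 2 * (\<integral>\<^sup>+y. ennreal ((x0 - y)\<^sup>2) \<partial>\<nu>) + ennreal (2 * x0\<^sup>2)"
    using emeasure_space_1 by (subst nn_integral_add) (auto simp: nn_integral_cmult)
  also have "\<dots> < \<infinity>"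
    using x0 by (simp add: less_top ennreal_mult_less_top)
  finally show ?thesis .
qed

lemma (in real_distribution) AE_zero_if_concentrated:
  assumes conc: "\<And>e. e > 0 \<Longrightarrow> prob {x. \<bar>x\<bar> \<le> e} = 1"
  shows "AE x in M. x = 0"
proof -
  have "AE x in M. \<forall>k::nat. \<bar>x\<bar> \<le> 1 / Suc k"
    unfolding AE_all_countable
  proof
    fix k :: nat
    show "AE x in M. \<bar>x\<bar> \<le> 1 / Suc k"
      using AE_prob_1[OF conc[of "1 / Suc k"]] by simp
  qed
  then show ?thesis
  proof (rule AE_mp, intro AE_I2 impI)
    fix x :: real
    assume small: "\<forall>k::nat. \<bar>x\<bar> \<le> 1 / Suc k"
    show "x = 0"
    proof (rule ccontr)
      assume "x \<noteq> 0"
      then obtain k :: nat where "1 / Suc k < \<bar>x\<bar>"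
        using nat_approx_posE[of "\<bar>x\<bar>"] by auto
      then show False using small by (meson not_le)
    qed
  qed
qed

lemma (in real_distribution) char_AE_zero:
  assumes "AE x in M. x = 0"
  shows "char M t = 1"
proof -
  have "char M t = (\<integral>x. 1 \<partial>M)"
    unfolding char_def using assms by (intro integral_cong_AE) (auto elim!: AE_mp)
  then show ?thesis using prob_space by simp
qed

(* Levy's continuity theorem for a point mass: if char mu (a n t) -> 1 for every t,
   then the laws of a n X (X with law mu) converge weakly to the point mass at 0,
   i.e. their distribution functions converge to the unit step away from 0. *)
lemma cdf_scaled_tendsto_step:
  fixes a :: "nat \<Rightarrow> real"
  assumes \<mu>: "real_distribution \<mu>"
    and lim: "\<And>t. (\<lambda>n. char \<mu> (a n * t)) \<longlonglongrightarrow> 1"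
    and "x \<noteq> 0"
  shows "(\<lambda>n. cdf (distr \<mu> borel (\<lambda>y. a n * y)) x) \<longlonglongrightarrow> (if 0 \<le> x then 1 else 0)"
proof -
  interpret real_distribution \<mu> by fact
  define M where "M n = distr \<mu> borel (\<lambda>y. a n * y)" for n
  define \<delta>0 :: "real measure" where "\<delta>0 = return borel 0"
  have M: "real_distribution (M n)" for n
    unfolding M_def by (intro real_distribution_distr) simp
  have \<delta>0: "real_distribution \<delta>0"
    unfolding \<delta>0_def real_distribution_def real_distribution_axioms_def
    by (auto intro!: prob_space_return)
  have weak: "weak_conv_m M \<delta>0"
  proof (rule levy_continuity[OF M \<delta>0])
    fix t
    have "char (M n) t = char \<mu> (a n * t)" for n
      unfolding char_def M_def by (subst integral_distr) (auto simp: ac_simps)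
    moreover have "char \<delta>0 t = 1"
      unfolding char_def \<delta>0_def by (subst integral_return) auto
    ultimately show "(\<lambda>n. char (M n) t) \<longlonglongrightarrow> char \<delta>0 t" using lim by simp
  qed
  have cont: "isCont (cdf \<delta>0) x"
    using \<open>x \<noteq> 0\<close>
    by (subst finite_borel_measure.isCont_cdf[OF real_distribution.finite_borel_measure_M[OF \<delta>0]])
       (simp add: \<delta>0_def measure_return)
  have cdf_\<delta>0: "cdf \<delta>0 x = (if 0 \<le> x then 1 else 0)"
    unfolding cdf_def \<delta>0_def by (simp add: measure_return)
  have "(\<lambda>n. cdf (M n) x) \<longlonglongrightarrow> cdf \<delta>0 x"
    using weak cont unfolding weak_conv_m_def weak_conv_def by blast
  then show ?thesis
    unfolding M_def cdf_\<delta>0 .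
qed

(* If moreover the scales stay above some delta > 0, then mu is the point mass at 0:
   the mass of mu on [-e, e] dominates that of the law of a n X on (-delta e, delta e],
   which tends to 1. *)
lemma char_scaled_tendsto_one_imp_degenerate:
  fixes a :: "nat \<Rightarrow> real"
  assumes \<mu>: "real_distribution \<mu>"
    and a: "\<delta> > 0" "\<And>n. \<delta> \<le> a n"
    and lim: "\<And>t. (\<lambda>n. char \<mu> (a n * t)) \<longlonglongrightarrow> 1"
  shows "AE x in \<mu>. x = 0"
proof -
  interpret real_distribution \<mu> by fact
  define M where "M n = distr \<mu> borel (\<lambda>y. a n * y)" for n
  have M: "real_distribution (M n)" for n
    unfolding M_def by (intro real_distribution_distr) simp
  have "prob {x. \<bar>x\<bar> \<le> e} = 1" if e: "e > 0" for e
  proof -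
    define \<eta> where "\<eta> = \<delta> * e"
    have \<eta>: "\<eta> > 0" using a e by (simp add: \<eta>_def)
    have "(\<lambda>n. cdf (M n) \<eta> - cdf (M n) (- \<eta>)) \<longlonglongrightarrow> 1 - 0"
      using \<eta> cdf_scaled_tendsto_step[OF \<mu> lim, of \<eta>] cdf_scaled_tendsto_step[OF \<mu> lim, of "- \<eta>"]
      unfolding M_def by (intro tendsto_diff) simp_all
    moreover have "cdf (M n) \<eta> - cdf (M n) (- \<eta>) \<le> prob {x. \<bar>x\<bar> \<le> e}" for n
    proof -
      have "cdf (M n) \<eta> - cdf (M n) (- \<eta>) = prob {x. a n * x \<in> {- \<eta><..\<eta>}}"
        using \<eta> finite_borel_measure.cdf_diff_eq[OF real_distribution.finite_borel_measure_M[OF M], of "- \<eta>" \<eta> n]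
        by (simp add: M_def measure_distr vimage_def)
      also have "\<dots> \<le> prob {x. \<bar>x\<bar> \<le> e}"
      proof (rule finite_measure_mono)
        show "{x. a n * x \<in> {- \<eta><..\<eta>}} \<subseteq> {x. \<bar>x\<bar> \<le> e}"
        proof safe
          fix x assume "a n * x \<in> {- \<eta><..\<eta>}"
          then have "\<bar>a n * x\<bar> \<le> \<delta> * e" by (auto simp: \<eta>_def)
          moreover have "\<delta> * \<bar>x\<bar> \<le> \<bar>a n * x\<bar>"
            using a(1) a(2)[of n] by (simp add: abs_mult mult_right_mono)
          ultimately have "\<delta> * \<bar>x\<bar> \<le> \<delta> * e" by linarith
          then show "\<bar>x\<bar> \<le> e" using a(1) by simp
        qed
      qed simp
      finally show ?thesis .
    qed
    ultimately have "1 \<le> prob {x. \<bar>x\<bar> \<le> e}"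
      by (intro LIMSEQ_le_const2) auto
    then show ?thesis using prob_le_1 by (simp add: antisym)
  qed
  then show ?thesis by (rule AE_zero_if_concentrated)
qed

lemma scales_approach_zero:
  fixes a :: "nat \<Rightarrow> real"
  assumes \<mu>: "real_distribution \<mu>"
    and lim: "\<And>t. (\<lambda>n. char \<mu> (a n * t)) \<longlonglongrightarrow> 1"
    and nondegenerate: "char \<mu> s \<noteq> 1"
    and \<epsilon>: "\<epsilon> > 0"
  shows "\<exists>n\<ge>N. a n \<le> \<epsilon>"
proof (rule ccontr)
  assume "\<not> (\<exists>n\<ge>N. a n \<le> \<epsilon>)"
  then have "\<epsilon> \<le> a (n + N)" for n
    using le_add2[of N n] by (auto simp: not_le intro: less_imp_le)
  moreover have "\<And>t. (\<lambda>n. char \<mu> (a (n + N) * t)) \<longlonglongrightarrow> 1"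
    using lim by (rule LIMSEQ_ignore_initial_segment)
  ultimately have "AE x in \<mu>. x = 0"
    using \<mu> \<epsilon> by (intro char_scaled_tendsto_one_imp_degenerate)
  then show False
    using real_distribution.char_AE_zero[OF \<mu>] nondegenerate by blast
qed

lemma (in real_distribution) Re_char: "Re (char M t) = (\<integral>x. cos (t * x) \<partial>M)"
proof -
  have "Re (char M t) = (\<integral>x. Re (iexp (t * x)) \<partial>M)"
    unfolding char_def by (rule integral_Re[symmetric]) (simp add: integrable_iexp)
  then show ?thesis by (simp add: Re_exp)
qed

lemma (in real_distribution) truncated_second_moment_le:
  assumes \<beta>: "\<beta> > 0"
  shows "(\<integral>\<^sup>+x. ennreal (if \<bar>x\<bar> \<le> 1 / \<beta> then x\<^sup>2 else 0) \<partial>M)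
    \<le> ennreal (4 / \<beta>\<^sup>2 * (1 - Re (char M \<beta>)))"
proof -
  have pointwise: "(if \<bar>x\<bar> \<le> 1 / \<beta> then x\<^sup>2 else 0) \<le> 4 / \<beta>\<^sup>2 * (1 - cos (\<beta> * x))" for x
  proof (cases "\<bar>x\<bar> \<le> 1 / \<beta>")
    case True
    then have "\<bar>\<beta> * x\<bar> \<le> 1" using \<beta> by (simp add: abs_mult field_simps)
    then have "(\<beta> * x)\<^sup>2 / 4 \<le> 1 - cos (\<beta> * x)" by (rule one_minus_cos_lower_bound)
    then show ?thesis using True \<beta> by (simp add: field_simps power_mult_distrib)
  qed (simp add: \<beta>)
  have int: "integrable M (\<lambda>x. 4 / \<beta>\<^sup>2 * (1 - cos (\<beta> * x)))"
    by (intro integrable_mult_right Bochner_Integration.integrable_diff)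
       (auto intro!: integrable_const_bound[where B=1])
  have "(\<integral>\<^sup>+x. ennreal (if \<bar>x\<bar> \<le> 1 / \<beta> then x\<^sup>2 else 0) \<partial>M)
      \<le> (\<integral>\<^sup>+x. ennreal (4 / \<beta>\<^sup>2 * (1 - cos (\<beta> * x))) \<partial>M)"
    by (intro nn_integral_mono ennreal_leI pointwise)
  also have "\<dots> = ennreal (\<integral>x. 4 / \<beta>\<^sup>2 * (1 - cos (\<beta> * x)) \<partial>M)"
    by (rule nn_integral_eq_integral[OF int]) auto
  also have "(\<integral>x. 4 / \<beta>\<^sup>2 * (1 - cos (\<beta> * x)) \<partial>M) = 4 / \<beta>\<^sup>2 * (1 - Re (char M \<beta>))"
    using prob_space by (simp add: Re_char Bochner_Integration.integral_diff
        integrable_const_bound[where B=1])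
  finally show ?thesis .
qed

(* If 1 - Re char beta <= C beta^2 along a sequence of scales beta tending to 0,
   then the second moment is at most 4 C (monotone convergence over truncations). *)
lemma (in real_distribution) second_moment_le:
  assumes small: "\<And>\<epsilon>. \<epsilon> > 0 \<Longrightarrow> \<exists>\<beta>>0. \<beta> \<le> \<epsilon> \<and> 1 - Re (char M \<beta>) \<le> C * \<beta>\<^sup>2"
  shows "(\<integral>\<^sup>+x. ennreal (x\<^sup>2) \<partial>M) \<le> ennreal (4 * C)"
proof -
  define g where "g k x = ennreal (if \<bar>x\<bar> \<le> real k then x\<^sup>2 else 0)" for k :: nat and x :: real
  have bound: "(\<integral>\<^sup>+x. g k x \<partial>M) \<le> ennreal (4 * C)" for k
  proof -
    obtain \<beta> where \<beta>: "\<beta> > 0" "\<beta> \<le> 1 / (real k + 1)" "1 - Re (char M \<beta>) \<le> C * \<beta>\<^sup>2"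
      using small[of "1 / (real k + 1)"] by auto
    have "real k \<le> 1 / \<beta>"
      using \<beta>(1,2) by (simp add: field_simps)
    then have "(\<integral>\<^sup>+x. g k x \<partial>M) \<le> (\<integral>\<^sup>+x. ennreal (if \<bar>x\<bar> \<le> 1 / \<beta> then x\<^sup>2 else 0) \<partial>M)"
      unfolding g_def by (intro nn_integral_mono ennreal_leI) auto
    also have "\<dots> \<le> ennreal (4 / \<beta>\<^sup>2 * (1 - Re (char M \<beta>)))"
      using \<beta>(1) by (rule truncated_second_moment_le)
    also have "\<dots> \<le> ennreal (4 * C)"
      using \<beta>(1,3) by (intro ennreal_leI) (simp add: field_simps)
    finally show ?thesis .
  qed
  have "(\<lambda>x. ennreal (x\<^sup>2)) = (\<lambda>x. SUP k. g k x)"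
  proof
    fix x :: real
    show "ennreal (x\<^sup>2) = (SUP k. g k x)"
    proof (rule antisym)
      have "g (nat \<lceil>\<bar>x\<bar>\<rceil>) x = ennreal (x\<^sup>2)"
        unfolding g_def by (simp add: real_nat_ceiling_ge)
      then show "ennreal (x\<^sup>2) \<le> (SUP k. g k x)"
        by (metis SUP_upper UNIV_I)
    qed (auto simp: g_def intro!: SUP_least ennreal_leI)
  qed
  then have "(\<integral>\<^sup>+x. ennreal (x\<^sup>2) \<partial>M) = (SUP k. \<integral>\<^sup>+x. g k x \<partial>M)"
    by (simp add: g_def incseq_def le_fun_def nn_integral_monotone_convergence_SUP)
  also have "\<dots> \<le> ennreal (4 * C)"
    by (rule SUP_least) (rule bound)
  finally show ?thesis .
qed

(* The deficit 1 - phi (a n) is O(1/n) = O((a n)^2), and the scales a n approach 0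
   because the law is not degenerate. *)
lemma second_moment_finite_if_powers_converge:
  fixes a :: "nat \<Rightarrow> real" and \<phi> L :: "real \<Rightarrow> real"
  assumes \<mu>: "real_distribution \<mu>"
    and char_real: "\<And>t. char \<mu> t = complex_of_real (\<phi> t)" and \<phi>_nonneg: "\<And>t. 0 \<le> \<phi> t"
    and lim: "\<And>t. (\<lambda>n. \<phi> (a n * t) ^ n) \<longlonglongrightarrow> L t" and L_pos: "\<And>t. L t > 0" and "L 1 \<noteq> 1"
    and a: "\<And>n. 1 / sqrt (real n) \<le> a n"
  shows "(\<integral>\<^sup>+x. ennreal (x\<^sup>2) \<partial>\<mu>) < \<infinity>"
proof -
  interpret real_distribution \<mu> by fact
  have \<phi>_le_1: "\<phi> t \<le> 1" for t
    using cmod_char_le_1[of t] char_real[of t] by simp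
  have deficit: "\<exists>N C. \<forall>n\<ge>N. real n * (1 - \<phi> (a n * t)) \<le> C" for t
    using \<phi>_nonneg lim L_pos by (rule power_tendsto_pos_imp_deficit_bounded)
  have char_lim: "(\<lambda>n. char \<mu> (a n * t)) \<longlonglongrightarrow> 1" for t
  proof -
    obtain N C where "\<forall>n\<ge>N. real n * (1 - \<phi> (a n * t)) \<le> C"
      using deficit[of t] by blast
    then have "(\<lambda>n. \<phi> (a n * t)) \<longlonglongrightarrow> 1"
      using \<phi>_le_1 by (intro deficit_bounded_imp_tendsto_one) auto
    then show ?thesis
      unfolding char_real by (metis of_real_1 tendsto_of_real)
  qed
  obtain s where nondegenerate: "char \<mu> s \<noteq> 1"
  proof -
    have "\<not> (\<forall>n. \<phi> (a n * 1) = 1)"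
    proof
      assume "\<forall>n. \<phi> (a n * 1) = 1"
      then have "(\<lambda>n. \<phi> (a n * 1) ^ n) \<longlonglongrightarrow> 1" by simp
      with lim[of 1] show False using \<open>L 1 \<noteq> 1\<close> LIMSEQ_unique by blast
    qed
    then show ?thesis using that char_real by force
  qed
  obtain N C where NC: "\<And>n. n \<ge> N \<Longrightarrow> real n * (1 - \<phi> (a n)) \<le> C"
    using deficit[of 1] by auto
  have "(\<integral>\<^sup>+x. ennreal (x\<^sup>2) \<partial>\<mu>) \<le> ennreal (4 * C)"
  proof (rule second_moment_le)
    fix \<epsilon> :: real
    assume "\<epsilon> > 0"
    then obtain n where n: "n \<ge> max N 1" "a n \<le> \<epsilon>"
      using scales_approach_zero[OF \<mu> char_lim nondegenerate] by blast
    have "0 < 1 / sqrt (real n)"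
      using n(1) by simp
    then have "a n > 0"
      using a[of n] by linarith
    moreover have "1 - \<phi> (a n) \<le> C * (a n)\<^sup>2"
      using a[of n] n(1) NC[of n] \<phi>_le_1 by (intro deficit_le_scale_squared) auto
    ultimately show "\<exists>\<beta>>0. \<beta> \<le> \<epsilon> \<and> 1 - Re (char \<mu> \<beta>) \<le> C * \<beta>\<^sup>2"
      using n(2) char_real by auto
  qed
  also have "\<dots> < \<infinity>" by simp
  finally show ?thesis .
qed

(* The theorem: taking absolute values squared in the hypothesis shows that the
   symmetrization of nu satisfies the symmetric form with L t = exp (- sigma^2 t^2). *)
theorem lemma4:
  fixes \<nu> :: "real measure" and b c :: "nat \<Rightarrow> real" and m \<sigma> :: real
  assumes "real_distribution \<nu>"
    and "\<And>n. b n > 0"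
    and "\<sigma> > 0"
    and "\<And>t. (\<lambda>n. exp (\<i> * complex_of_real (t * c n)) * (char \<nu> (b n * t)) ^ n)
              \<longlonglongrightarrow> exp (complex_of_real (t * m) * \<i> - complex_of_real ((1/2) * \<sigma>\<^sup>2 * t\<^sup>2))"
    and "\<And>n. b n \<ge> 1 / sqrt (real n)"
  shows "(\<integral>\<^sup>+ x. ennreal (x\<^sup>2) \<partial>\<nu>) < \<infinity>"
proof -
  define \<phi> where "\<phi> t = (cmod (char \<nu> t))\<^sup>2" for t
  have "(\<lambda>n. \<phi> (b n * t) ^ n) \<longlonglongrightarrow> exp (- (\<sigma>\<^sup>2 * t\<^sup>2))" for t
  proof -
    have "(\<lambda>n. (norm (exp (\<i> * complex_of_real (t * c n)) * (char \<nu> (b n * t)) ^ n))\<^sup>2)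
        \<longlonglongrightarrow> (norm (exp (complex_of_real (t * m) * \<i> - complex_of_real ((1/2) * \<sigma>\<^sup>2 * t\<^sup>2))))\<^sup>2"
      by (intro tendsto_intros assms(4))
    moreover have "\<phi> (b n * t) ^ n = (norm (exp (\<i> * complex_of_real (t * c n)) * (char \<nu> (b n * t)) ^ n))\<^sup>2" for n
      by (simp add: \<phi>_def norm_mult norm_power flip: power_mult) (simp add: mult.commute)
    ultimately show ?thesis
      by (simp add: norm_exp_eq_Re flip: exp_of_nat_mult)
  qed
  then have "(\<integral>\<^sup>+x. ennreal (x\<^sup>2) \<partial>symmetrization \<nu>) < \<infinity>"
    using assms(1,3,5)
    by (intro second_moment_finite_if_powers_converge[where \<phi>=\<phi> and a=b and L="\<lambda>t. exp (- (\<sigma>\<^sup>2 * t\<^sup>2))"])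
       (simp_all add: real_distribution_symmetrization char_symmetrization \<phi>_def)
  then show ?thesis
    by (rule second_moment_symmetrization[OF assms(1)])
qed

end
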